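(* For every $n\ge 2$, $f(n,n-1)=f(n+1,n-1)-f(n,n-2)$.
   Context: A complete non-ambiguous matrix (CNM) of size $n$ is an $n\times n$ matrix $M=(m_{i,j})$ with entries in $\{0,1\}$ whose support $T=\{(i,j): m_{i,j}=1\}$ (whose elements are called vertices) satisfies: (1) $(1,1)\in T$; (2) for every $p=(i,j)\in T$ with $p\neq(1,1)$, exactly one of the following holds: there is $(i',j)\in T$ with $i'<i$, or there is $(i,j')\in T$ with $j'<j$; (3) every row and every column of $M$ contains at least one vertex; (4) define the parent of $p=(i,j)\neq(1,1)$ to be $(i',j)$ with $i'<i$ maximal if such a vertex exists, and otherwise $(i,j')$ with $j'<j$ maximal; then every vertex is the parent of either zero or exactly two vertices. A vertex with no children is a leaf. A CNM of size $n$ is upper-diagonal if its leaves are exactly the positions $(i,n+1-i)$, $1\le i\le n$. For $n\ge 2$ and $0\le k\le n-2$, $f(n,k)$ is the number of upper-diagonal CNMs $M$ of size $n$ with $m_{i,n-i}=0$ for $1\le i\le k$ and $m_{k+1,n-k-1}=1$; $f(n,n-1)$ is the number of upper-diagonal CNMs of size $n$ with $m_{i,n-i}=0$ for all $1\le i\le n-1$; by convention $f(n,-1)=0$. *)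

theory Defs
  imports Main
begin

text \<open>A CNM of size n is identified with its support T (set of vertices),
  a set of 1-based positions (i,j) with 1 \<le> i,j \<le> n.\<close>

definition parent :: "(nat \<times> nat) set \<Rightarrow> nat \<times> nat \<Rightarrow> nat \<times> nat" where
  "parent T p = (case p of (i, j) \<Rightarrow>
     if \<exists>i'<i. (i', j) \<in> T then (Max {i'. i' < i \<and> (i', j) \<in> T}, j)
     else (i, Max {j'. j' < j \<and> (i, j') \<in> T}))"

definition children :: "(nat \<times> nat) set \<Rightarrow> nat \<times> nat \<Rightarrow> (nat \<times> nat) set" where
  "children T p = {q \<in> T. q \<noteq> (1, 1) \<and> parent T q = p}"

definition is_cnm :: "nat \<Rightarrow> (nat \<times> nat) set \<Rightarrow> bool" where
  "is_cnm n T \<longleftrightarrow>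
     T \<subseteq> {1..n} \<times> {1..n} \<and>
     (1, 1) \<in> T \<and>
     (\<forall>(i, j) \<in> T. (i, j) \<noteq> (1, 1) \<longrightarrow>
        ((\<exists>i'<i. (i', j) \<in> T) \<noteq> (\<exists>j'<j. (i, j') \<in> T))) \<and>
     (\<forall>i\<in>{1..n}. \<exists>j. (i, j) \<in> T) \<and>
     (\<forall>j\<in>{1..n}. \<exists>i. (i, j) \<in> T) \<and>
     (\<forall>p\<in>T. card (children T p) = 0 \<or> card (children T p) = 2)"

definition leaves :: "(nat \<times> nat) set \<Rightarrow> (nat \<times> nat) set" where
  "leaves T = {p \<in> T. children T p = {}}"

definition upper_diagonal_cnm :: "nat \<Rightarrow> (nat \<times> nat) set \<Rightarrow> bool" where
  "upper_diagonal_cnm n T \<longleftrightarrow> is_cnm n T \<and> leaves T = {(i, n + 1 - i) | i. i \<in> {1..n}}"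

text \<open>f n k for 0 \<le> k \<le> n-2 and for k = n-1 (value 0 outside this range; the
  convention f(n,-1)=0 is not needed for the statement).\<close>
definition f :: "nat \<Rightarrow> nat \<Rightarrow> nat" where
  "f n k =
    (if k + 2 \<le> n then
       card {T. upper_diagonal_cnm n T \<and> (\<forall>i\<in>{1..k}. (i, n - i) \<notin> T)
               \<and> (k + 1, n - k - 1) \<in> T}
     else if k + 1 = n then
       card {T. upper_diagonal_cnm n T \<and> (\<forall>i\<in>{1..n-1}. (i, n - i) \<notin> T)}
     else 0)"

end

theory Submission
  imports Defs
begin

text \<open>The upper-diagonal CNMs of size \<open>n+1\<close> containing the vertex \<open>(n,1)\<close> correspond
  bijectively to the upper-diagonal CNMs of size \<open>n\<close>: the vertex \<open>(n,1)\<close> is always a leaf of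
  the latter, and turning it into an internal vertex whose two children are the new leaves
  \<open>(n,2)\<close> and \<open>(n+1,1)\<close> (inserting a fresh column 2 and a fresh row \<open>n+1\<close>) preserves all
  the CNM conditions in both directions. This moves every leaf \<open>(i,n+1-i)\<close> with \<open>i<n\<close> one
  step to the right, so the constraints \<open>(i,n-i) \<notin> T\<close> for \<open>i \<le> n-2\<close> become the constraints
  \<open>(i,n+1-i) \<notin> T\<close> for \<open>i \<le> n-2\<close>, while \<open>(n-1,2)\<close> is never a vertex after the insertion.
  Hence \<open>f(n+1,n-1)\<close> counts the CNMs of size \<open>n\<close> avoiding \<open>(i,n-i)\<close> for \<open>i \<le> n-2\<close>, and
  these split into \<open>f(n,n-1) + f(n,n-2)\<close> according to whether \<open>(n-1,1)\<close> is a vertex.\<close>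

definition exclusive_parent_at :: "(nat \<times> nat) set \<Rightarrow> nat \<times> nat \<Rightarrow> bool" where
  "exclusive_parent_at T q \<longleftrightarrow> (case q of (i, j) \<Rightarrow> (i, j) \<noteq> (1, 1) \<longrightarrow>
     ((\<exists>i'<i. (i', j) \<in> T) \<noteq> (\<exists>j'<j. (i, j') \<in> T)))"

definition exclusive_parent :: "(nat \<times> nat) set \<Rightarrow> bool" where
  "exclusive_parent T \<longleftrightarrow> (\<forall>q\<in>T. exclusive_parent_at T q)"

definition antidiagonal :: "nat \<Rightarrow> (nat \<times> nat) set" where
  "antidiagonal n = {(i, n + 1 - i) | i. i \<in> {1..n}}"

lemma is_cnm_iff:
  "is_cnm n T \<longleftrightarrow> T \<subseteq> {1..n} \<times> {1..n} \<and> (1, 1) \<in> T \<and> exclusive_parent T \<and>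
     (\<forall>i\<in>{1..n}. \<exists>j. (i, j) \<in> T) \<and> (\<forall>j\<in>{1..n}. \<exists>i. (i, j) \<in> T) \<and>
     (\<forall>p\<in>T. card (children T p) = 0 \<or> card (children T p) = 2)"
  unfolding is_cnm_def exclusive_parent_def exclusive_parent_at_def by blast

lemma upper_diagonal_cnm_iff:
  "upper_diagonal_cnm n T \<longleftrightarrow> is_cnm n T \<and> leaves T = antidiagonal n"
  unfolding upper_diagonal_cnm_def antidiagonal_def by simp

lemma is_cnm_finite: "is_cnm n T \<Longrightarrow> finite T"
  unfolding is_cnm_def by (metis finite_SigmaI finite_atLeastAtMost finite_subset)

lemma exclusive_parentD:
  "exclusive_parent T \<Longrightarrow> (i, j) \<in> T \<Longrightarrow> (i, j) \<noteq> (1, 1) \<Longrightarrow>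
     (\<exists>i'<i. (i', j) \<in> T) \<noteq> (\<exists>j'<j. (i, j') \<in> T)"
  unfolding exclusive_parent_def exclusive_parent_at_def by blast

lemma parent_above:
  assumes "\<exists>i'<i. (i', j) \<in> T"
  shows "parent T (i, j) = (Max {i'. i' < i \<and> (i', j) \<in> T}, j)"
  using assms unfolding parent_def by simp

lemma parent_left:
  assumes "\<not> (\<exists>i'<i. (i', j) \<in> T)"
  shows "parent T (i, j) = (i, Max {j'. j' < j \<and> (i, j') \<in> T})"
  unfolding parent_def prod.case if_not_P[OF assms] by (rule refl)

lemma parent_mem_coordinate_sum_less:
  assumes "exclusive_parent T" "q \<in> T" "q \<noteq> (1, 1)"
  shows "parent T q \<in> T \<and> fst (parent T q) + snd (parent T q) < fst q + snd q"
proof -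
  obtain i j where q: "q = (i, j)" by (cases q)
  show ?thesis
  proof (cases "\<exists>i'<i. (i', j) \<in> T")
    case True
    let ?A = "{i'. i' < i \<and> (i', j) \<in> T}"
    have "finite ?A" by (rule finite_subset[of _ "{..<i}"]) auto
    then have "Max ?A \<in> ?A" using True by (intro Max_in) auto
    then show ?thesis using parent_above[OF True] q by auto
  next
    case False
    then have "\<exists>j'<j. (i, j') \<in> T" using exclusive_parentD[OF assms(1)] assms(2,3) q by blast
    let ?A = "{j'. j' < j \<and> (i, j') \<in> T}"
    have "finite ?A" by (rule finite_subset[of _ "{..<j}"]) auto
    then have "Max ?A \<in> ?A" using \<open>\<exists>j'<j. (i, j') \<in> T\<close> by (intro Max_in) auto
    then show ?thesis using parent_left[OF False] q by auto
  qed
qed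

lemma leaf_if_max_coordinate_sum:
  assumes "exclusive_parent T" "q \<in> T" "\<And>p. p \<in> T \<Longrightarrow> fst p + snd p \<le> fst q + snd q"
  shows "q \<in> leaves T"
proof (rule ccontr)
  assume "q \<notin> leaves T"
  then obtain c where c: "c \<in> T" "c \<noteq> (1, 1)" "parent T c = q"
    using assms(2) unfolding leaves_def children_def by auto
  then have "fst q + snd q < fst c + snd c"
    using parent_mem_coordinate_sum_less[OF assms(1) c(1,2)] by simp
  with assms(3)[OF c(1)] show False by simp
qed

lemma upper_diagonal_cnm_coordinate_sum_le:
  assumes U: "upper_diagonal_cnm n T" and p: "(i, j) \<in> T"
  shows "i + j \<le> n + 1"
proof -
  have cnm: "is_cnm n T" and lv: "leaves T = antidiagonal n"
    using U unfolding upper_diagonal_cnm_iff by simp_all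
  have fin: "finite T" using cnm by (rule is_cnm_finite)
  let ?s = "\<lambda>p::nat \<times> nat. fst p + snd p"
  have "Max (?s ` T) \<in> ?s ` T" using fin p by (intro Max_in) auto
  then obtain q where q: "q \<in> T" "?s q = Max (?s ` T)" by auto
  have q_max: "?s p \<le> ?s q" if "p \<in> T" for p
    using fin that unfolding q(2) by (intro Max_ge) auto
  have "q \<in> antidiagonal n"
    using leaf_if_max_coordinate_sum[OF _ q(1) q_max] cnm lv unfolding is_cnm_iff by auto
  then have "?s q = n + 1" unfolding antidiagonal_def by auto
  with q_max[OF p] show ?thesis by simp
qed

lemma upper_diagonal_cnm_last_row:
  assumes U: "upper_diagonal_cnm n T" and "n \<ge> 1"
  shows "(n, 1) \<in> T" and "(n, j) \<in> T \<Longrightarrow> j = 1"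
proof -
  have "(n, 1) \<in> leaves T"
    using U \<open>n \<ge> 1\<close> unfolding upper_diagonal_cnm_iff antidiagonal_def by force
  then show "(n, 1) \<in> T" unfolding leaves_def by simp
  assume "(n, j) \<in> T"
  moreover have "T \<subseteq> {1..n} \<times> {1..n}"
    using U unfolding upper_diagonal_cnm_def is_cnm_def by blast
  ultimately show "j = 1" using upper_diagonal_cnm_coordinate_sum_le[OF U] by fastforce
qed

definition skip2 :: "nat \<Rightarrow> nat" where
  "skip2 j = (if j \<le> 1 then j else Suc j)"

definition skip_col2 :: "nat \<times> nat \<Rightarrow> nat \<times> nat" where
  "skip_col2 p = (fst p, skip2 (snd p))"

definition split_corner :: "nat \<Rightarrow> (nat \<times> nat) set \<Rightarrow> (nat \<times> nat) set" where
  "split_corner n S = skip_col2 ` S \<union> {(n, 2), (n + 1, 1)}"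

lemma skip2_eq_iff [simp]: "skip2 a = skip2 b \<longleftrightarrow> a = b"
  and skip2_less_iff [simp]: "skip2 a < skip2 b \<longleftrightarrow> a < b"
  and skip2_neq_2 [simp]: "skip2 a \<noteq> 2"
  and skip2_Suc_0 [simp]: "skip2 (Suc 0) = Suc 0"
  and skip2_eq_Suc_0_iff [simp]: "skip2 a = Suc 0 \<longleftrightarrow> a = Suc 0"
  and skip2_eq_0_iff [simp]: "skip2 a = 0 \<longleftrightarrow> a = 0"
  by (auto simp: skip2_def)

lemma mono_skip2: "mono skip2"
  unfolding mono_def skip2_def by auto

lemma skip2_antidiagonal: "i < n \<Longrightarrow> skip2 (n + 1 - i) = n + 2 - i"
  by (auto simp: skip2_def)

lemma skip_col2_simp [simp]: "skip_col2 (i, j) = (i, skip2 j)"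
  by (simp add: skip_col2_def)

lemma skip_col2_eq_iff [simp]: "skip_col2 p = skip_col2 q \<longleftrightarrow> p = q"
  by (cases p; cases q) simp

lemma inj_skip_col2: "inj skip_col2"
  by (auto intro: injI)

lemma mem_skip_col2_image_iff [simp]:
  "(a, c) \<in> skip_col2 ` S \<longleftrightarrow> (\<exists>b. c = skip2 b \<and> (a, b) \<in> S)"
  by force

lemma skip_col2_mem_split_corner_iff:
  "fst p \<le> n \<Longrightarrow> skip_col2 p \<in> split_corner n S \<longleftrightarrow> p \<in> S"
  by (cases p) (auto simp: split_corner_def)

lemma split_cornerE:
  assumes "q \<in> split_corner n S"
  obtains p where "p \<in> S" "q = skip_col2 p" | "q = (n, 2)" | "q = (n + 1, 1)"
  using assms unfolding split_corner_def by blast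

lemma antidiagonal_Suc:
  assumes "n \<ge> 1"
  shows "antidiagonal (n + 1) = skip_col2 ` (antidiagonal n - {(n, 1)}) \<union> {(n, 2), (n + 1, 1)}"
    (is "?L = ?R")
proof (intro set_eqI iffI)
  fix q assume "q \<in> ?L"
  then obtain i where q: "q = (i, n + 2 - i)" "1 \<le> i" "i \<le> n + 1"
    unfolding antidiagonal_def by auto
  show "q \<in> ?R"
  proof (cases "i < n")
    case True
    then have "q = skip_col2 (i, n + 1 - i)" "(i, n + 1 - i) \<in> antidiagonal n - {(n, 1)}"
      using q skip2_antidiagonal[OF True] unfolding antidiagonal_def by auto
    then show ?thesis by blast
  next
    case False
    then have "q = (n, 2) \<or> q = (n + 1, 1)" using q by auto
    then show ?thesis by blast
  qed
next
  fix q assume "q \<in> ?R"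
  then consider i where "q = skip_col2 (i, n + 1 - i)" "1 \<le> i" "i < n"
    | "q = (n, 2)" | "q = (n + 1, 1)"
    unfolding antidiagonal_def by fastforce
  then show "q \<in> ?L"
  proof cases
    case 1
    then show ?thesis using skip2_antidiagonal[of i n] unfolding antidiagonal_def by auto
  qed (use assms in \<open>auto simp: antidiagonal_def\<close>)
qed

text \<open>Only the shape of \<open>S\<close> is assumed here, not that it is a CNM, so that the CNM
  conditions can be transferred through \<open>split_corner\<close> in both directions.\<close>

locale last_row_corner =
  fixes n :: nat and S :: "(nat \<times> nat) set"
  assumes grid: "S \<subseteq> {1..n} \<times> {1..n}" and corner: "(n, 1) \<in> S"
    and last_row: "\<And>j. (n, j) \<in> S \<Longrightarrow> j = 1"
begin

lemma finite_S: "finite S"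
  using grid by (rule finite_subset) simp

lemma bounds: "(i, j) \<in> S \<Longrightarrow> 1 \<le> i \<and> i \<le> n \<and> 1 \<le> j \<and> j \<le> n"
  using grid by auto

lemma n_pos: "n \<ge> 1"
  using bounds[OF corner] by simp

lemma not_mem_col0: "(i, 0) \<notin> split_corner n S"
  using bounds by (auto simp: split_corner_def)

lemma skip_col2_mem: "p \<in> S \<Longrightarrow> skip_col2 p \<in> split_corner n S"
  unfolding split_corner_def by blast

lemma corner_mem: "(n, Suc 0) \<in> split_corner n S"
  using skip_col2_mem[OF corner] by simp

lemma col2_mem_iff: "(i, 2) \<in> split_corner n S \<longleftrightarrow> i = n"
  unfolding split_corner_def by auto

lemma above_eq: "i \<le> n \<Longrightarrow>
    {i'. i' < i \<and> (i', skip2 j) \<in> split_corner n S} = {i'. i' < i \<and> (i', j) \<in> S}"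
  by (auto simp: split_corner_def)

lemma left_eq: "i < n \<Longrightarrow>
    {j'. j' < skip2 j \<and> (i, j') \<in> split_corner n S} = skip2 ` {j'. j' < j \<and> (i, j') \<in> S}"
  by (auto simp: split_corner_def)

lemma left_nonempty_iff: "(i, j) \<in> S \<Longrightarrow>
    (\<exists>j'<skip2 j. (i, j') \<in> split_corner n S) \<longleftrightarrow> (\<exists>j'<j. (i, j') \<in> S)"
proof (cases "i = n")
  case True
  assume "(i, j) \<in> S"
  then have "j = 1" using last_row True by simp
  then show ?thesis using True not_mem_col0 bounds by (auto simp: less_Suc_eq)
next
  case False
  assume "(i, j) \<in> S"
  then have "i < n" using bounds False by fastforce
  then show ?thesis using left_eq[of i j] by auto
qed

lemma exclusive_parent_at_skip_col2:
  assumes "p \<in> S"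
  shows "exclusive_parent_at (split_corner n S) (skip_col2 p) \<longleftrightarrow> exclusive_parent_at S p"
proof -
  obtain i j where p: "p = (i, j)" by (cases p)
  have "i \<le> n" using assms p bounds by blast
  then have above: "(\<exists>i'<i. (i', skip2 j) \<in> split_corner n S) \<longleftrightarrow> (\<exists>i'<i. (i', j) \<in> S)"
    using above_eq[of i j] by blast
  have corner11: "(i, skip2 j) \<noteq> (1, 1) \<longleftrightarrow> (i, j) \<noteq> (1, 1)" by simp
  show ?thesis
    unfolding exclusive_parent_at_def p skip_col2_simp prod.case above corner11
      left_nonempty_iff[OF assms[unfolded p]] ..
qed

lemma exclusive_parent_split_corner_iff:
  "exclusive_parent (split_corner n S) \<longleftrightarrow> exclusive_parent S"
proof -
  have "exclusive_parent_at (split_corner n S) (n, 2)"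
    using col2_mem_iff corner_mem unfolding exclusive_parent_at_def by (auto simp: less_2_cases_iff)
  moreover have "exclusive_parent_at (split_corner n S) (n + 1, 1)"
    using corner_mem not_mem_col0 unfolding exclusive_parent_at_def by auto
  ultimately show ?thesis
    using exclusive_parent_at_skip_col2
    unfolding exclusive_parent_def split_corner_def by auto
qed

lemma parent_skip_col2:
  assumes ep: "exclusive_parent S" and p: "p \<in> S" "p \<noteq> (1, 1)"
  shows "parent (split_corner n S) (skip_col2 p) = skip_col2 (parent S p)"
proof -
  obtain i j where pij: "p = (i, j)" by (cases p)
  have "i \<le> n" using p pij bounds by blast
  show ?thesis
  proof (cases "\<exists>i'<i. (i', j) \<in> S")
    case True
    then have "\<exists>i'<i. (i', skip2 j) \<in> split_corner n S" using above_eq[OF \<open>i \<le> n\<close>] by blast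
    then show ?thesis using parent_above[OF True] parent_above above_eq[OF \<open>i \<le> n\<close>] pij
      by simp
  next
    case False
    then have F: "\<not> (\<exists>i'<i. (i', skip2 j) \<in> split_corner n S)"
      using above_eq[OF \<open>i \<le> n\<close>] by blast
    have L: "\<exists>j'<j. (i, j') \<in> S" using exclusive_parentD[OF ep] p pij False by blast
    have "i \<noteq> n"
    proof
      assume "i = n"
      then have "j = 1" using last_row p pij by simp
      with L \<open>i = n\<close> show False using bounds by fastforce
    qed
    then have "i < n" using \<open>i \<le> n\<close> by simp
    let ?X = "{j'. j' < j \<and> (i, j') \<in> S}"
    have "finite ?X" by (rule finite_subset[of _ "{..<j}"]) auto
    moreover have "?X \<noteq> {}" using L by auto
    ultimately have "Max (skip2 ` ?X) = skip2 (Max ?X)" using mono_Max_commute[OF mono_skip2] by simp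
    then show ?thesis using parent_left[OF False] parent_left[OF F] left_eq[OF \<open>i < n\<close>] pij
      by simp
  qed
qed

lemma parent_col2: "parent (split_corner n S) (n, 2) = (n, 1)"
proof -
  have C: "\<not> (\<exists>i'<n. (i', 2) \<in> split_corner n S)" using col2_mem_iff by auto
  have "{j'. j' < 2 \<and> (n, j') \<in> split_corner n S} = {1}"
    using corner_mem not_mem_col0 by (auto simp: less_2_cases_iff)
  then show ?thesis using parent_left[OF C] by simp
qed

lemma parent_last_row: "parent (split_corner n S) (n + 1, 1) = (n, 1)"
proof -
  have A: "\<exists>i'<n + 1. (i', 1) \<in> split_corner n S" using corner_mem by auto
  have "Max {i'. i' < n + 1 \<and> (i', 1) \<in> split_corner n S} = n"
    using corner_mem by (intro Max_eqI) auto
  then show ?thesis using parent_above[OF A] by simp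
qed

lemma children_skip_col2:
  assumes ep: "exclusive_parent S" and p: "p \<in> S"
  shows "children (split_corner n S) (skip_col2 p) =
    skip_col2 ` children S p \<union> (if p = (n, 1) then {(n, 2), (n + 1, 1)} else {})"
proof (intro set_eqI iffI)
  fix q assume "q \<in> children (split_corner n S) (skip_col2 p)"
  then have q: "q \<in> split_corner n S" "q \<noteq> (1, 1)" "parent (split_corner n S) q = skip_col2 p"
    unfolding children_def by auto
  from q(1) show "q \<in> skip_col2 ` children S p \<union> (if p = (n, 1) then {(n, 2), (n + 1, 1)} else {})"
  proof (cases rule: split_cornerE)
    case (1 r)
    then have "r \<noteq> (1, 1)" using q(2) by auto
    then have "parent S r = p" using q(3) 1 parent_skip_col2[OF ep] by simp
    then show ?thesis using 1 \<open>r \<noteq> (1, 1)\<close> unfolding children_def by auto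
  next
    case 2
    then show ?thesis using q(3) parent_col2 by (cases p) (auto simp: skip2_def split: if_splits)
  next
    case 3
    then show ?thesis using q(3) parent_last_row by (cases p) (auto simp: skip2_def split: if_splits)
  qed
next
  fix q assume "q \<in> skip_col2 ` children S p \<union> (if p = (n, 1) then {(n, 2), (n + 1, 1)} else {})"
  then show "q \<in> children (split_corner n S) (skip_col2 p)"
  proof
    assume "q \<in> skip_col2 ` children S p"
    then obtain r where r: "r \<in> S" "r \<noteq> (1, 1)" "parent S r = p" "q = skip_col2 r"
      unfolding children_def by auto
    then show ?thesis using parent_skip_col2[OF ep r(1,2)] skip_col2_mem
      unfolding children_def by (cases r) auto
  next
    assume "q \<in> (if p = (n, 1) then {(n, 2), (n + 1, 1)} else {})"
    then show ?thesis
      using parent_last_row parent_col2 n_pos unfolding children_def split_corner_def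
      by (auto split: if_splits)
  qed
qed

lemma children_new_vertices:
  assumes ep: "exclusive_parent S" and q: "q = (n, 2) \<or> q = (n + 1, 1)"
  shows "children (split_corner n S) q = {}"
proof -
  have "parent (split_corner n S) c \<noteq> q" if c: "c \<in> split_corner n S" "c \<noteq> (1, 1)" for c
    using c(1)
  proof (cases rule: split_cornerE)
    case (1 r)
    then have "r \<noteq> (1, 1)" using c(2) by auto
    then have "parent (split_corner n S) c = skip_col2 (parent S r)"
      using parent_skip_col2[OF ep] 1 by simp
    moreover have "parent S r \<in> S" using parent_mem_coordinate_sum_less[OF ep 1(1) \<open>r \<noteq> (1, 1)\<close>] by simp
    ultimately show ?thesis using q bounds by (cases "parent S r") fastforce
  qed (use q parent_col2 parent_last_row in auto)
  then show ?thesis unfolding children_def by auto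
qed

lemma leaves_split_corner:
  assumes ep: "exclusive_parent S"
  shows "leaves (split_corner n S) = skip_col2 ` (leaves S - {(n, 1)}) \<union> {(n, 2), (n + 1, 1)}"
proof (intro set_eqI iffI)
  fix q assume q: "q \<in> leaves (split_corner n S)"
  then have "q \<in> split_corner n S" unfolding leaves_def by simp
  then show "q \<in> skip_col2 ` (leaves S - {(n, 1)}) \<union> {(n, 2), (n + 1, 1)}"
  proof (cases rule: split_cornerE)
    case (1 p)
    then show ?thesis using q children_skip_col2[OF ep 1(1)] unfolding leaves_def
      by (auto split: if_splits)
  qed auto
next
  fix q assume "q \<in> skip_col2 ` (leaves S - {(n, 1)}) \<union> {(n, 2), (n + 1, 1)}"
  then show "q \<in> leaves (split_corner n S)"
  proof
    assume "q \<in> skip_col2 ` (leaves S - {(n, 1)})"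
    then obtain p where "p \<in> leaves S" "p \<noteq> (n, 1)" "q = skip_col2 p" by auto
    then show ?thesis using children_skip_col2[OF ep] skip_col2_mem unfolding leaves_def by auto
  next
    assume "q \<in> {(n, 2), (n + 1, 1)}"
    then show ?thesis
      using children_new_vertices[OF ep] unfolding leaves_def split_corner_def by auto
  qed
qed

lemma card_children_skip_col2:
  assumes ep: "exclusive_parent S" and p: "p \<in> S"
  shows "card (children (split_corner n S) (skip_col2 p)) =
    card (children S p) + (if p = (n, 1) then 2 else 0)"
proof -
  have fin: "finite (children S p)" using finite_S unfolding children_def by simp
  have card_img: "card (skip_col2 ` children S p) = card (children S p)"
    using inj_skip_col2 by (simp add: card_image inj_on_subset)
  have disj: "skip_col2 ` children S p \<inter> {(n, 2), (n + 1, 1)} = {}"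
    using bounds unfolding children_def by fastforce
  have "card (skip_col2 ` children S p \<union> {(n, 2), (n + 1, 1)}) = card (children S p) + 2"
    using card_Un_disjoint[OF finite_imageI[OF fin] _ disj] card_img by simp
  then show ?thesis using children_skip_col2[OF ep p] card_img by (cases "p = (n, 1)") simp_all
qed

lemma binary_split_corner_iff:
  assumes ep: "exclusive_parent S"
  shows "(\<forall>q\<in>split_corner n S. card (children (split_corner n S) q) = 0
            \<or> card (children (split_corner n S) q) = 2) \<longleftrightarrow>
    (\<forall>p\<in>S. card (children S p) = 0 \<or> card (children S p) = 2) \<and> children S (n, 1) = {}"
proof -
  have "finite (children S (n, 1))" using finite_S unfolding children_def by simp
  then have "card (children S (n, 1)) + 2 = 0 \<or> card (children S (n, 1)) + 2 = 2
      \<longleftrightarrow> children S (n, 1) = {}" by simp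
  then show ?thesis
    using card_children_skip_col2[OF ep] children_new_vertices[OF ep] corner
    unfolding split_corner_def by auto
qed

lemma rows_split_corner_iff:
  "(\<forall>i\<in>{1..n + 1}. \<exists>j. (i, j) \<in> split_corner n S) \<longleftrightarrow> (\<forall>i\<in>{1..n}. \<exists>j. (i, j) \<in> S)"
proof -
  have "(\<exists>j. (i, j) \<in> split_corner n S) \<longleftrightarrow> (\<exists>j. (i, j) \<in> S) \<or> i = n + 1" for i
    using corner unfolding split_corner_def by auto
  then show ?thesis by (auto simp: le_Suc_eq)
qed

lemma cols_split_corner_iff:
  "(\<forall>j\<in>{1..n + 1}. \<exists>i. (i, j) \<in> split_corner n S) \<longleftrightarrow> (\<forall>j\<in>{1..n}. \<exists>i. (i, j) \<in> S)"
proof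
  assume A: "\<forall>j\<in>{1..n + 1}. \<exists>i. (i, j) \<in> split_corner n S"
  show "\<forall>j\<in>{1..n}. \<exists>i. (i, j) \<in> S"
  proof
    fix j assume "j \<in> {1..n}"
    then have "skip2 j \<in> {1..n + 1}" by (auto simp: skip2_def)
    then obtain i where "(i, skip2 j) \<in> split_corner n S" using A by blast
    then show "\<exists>i. (i, j) \<in> S" using corner unfolding split_corner_def by auto
  qed
next
  assume A: "\<forall>j\<in>{1..n}. \<exists>i. (i, j) \<in> S"
  show "\<forall>j\<in>{1..n + 1}. \<exists>i. (i, j) \<in> split_corner n S"
  proof
    fix j assume j: "j \<in> {1..n + 1}"
    show "\<exists>i. (i, j) \<in> split_corner n S"
    proof (cases "j \<le> 2")
      case True
      then show ?thesis using j corner_mem unfolding split_corner_def by (auto simp: le_Suc_eq)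
    next
      case False
      then obtain i where "(i, j - 1) \<in> S" using A j by fastforce
      moreover have "skip2 (j - 1) = j" using False by (auto simp: skip2_def)
      ultimately show ?thesis using skip_col2_mem by fastforce
    qed
  qed
qed

lemma grid_split_corner: "split_corner n S \<subseteq> {1..n + 1} \<times> {1..n + 1}"
  using grid n_pos unfolding split_corner_def by (auto simp: skip2_def)

lemma origin_mem_split_corner_iff: "(1, 1) \<in> split_corner n S \<longleftrightarrow> (1, 1) \<in> S"
  using skip_col2_mem_split_corner_iff[of "(1, 1)" n S] n_pos by simp

lemma is_cnm_split_corner_iff:
  "is_cnm (n + 1) (split_corner n S) \<longleftrightarrow> is_cnm n S \<and> children S (n, 1) = {}"
proof (cases "exclusive_parent S")
  case True
  then show ?thesis
    unfolding is_cnm_iff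
    using grid grid_split_corner origin_mem_split_corner_iff exclusive_parent_split_corner_iff
      rows_split_corner_iff cols_split_corner_iff binary_split_corner_iff[OF True]
    by auto
next
  case False
  then show ?thesis unfolding is_cnm_iff using exclusive_parent_split_corner_iff by auto
qed

lemma corner_mem_antidiagonal: "(n, 1) \<in> antidiagonal n"
  using n_pos unfolding antidiagonal_def by force

lemma leaves_split_corner_eq_antidiagonal_iff:
  assumes ep: "exclusive_parent S" and leaf: "(n, 1) \<in> leaves S"
  shows "leaves (split_corner n S) = antidiagonal (n + 1) \<longleftrightarrow> leaves S = antidiagonal n"
proof -
  have disjoint: "skip_col2 ` X \<inter> {(n, 2), (n + 1, 1)} = {}" if "fst ` X \<subseteq> {..n}" for X
  proof (intro equals0I)
    fix q assume "q \<in> skip_col2 ` X \<inter> {(n, 2), (n + 1, 1)}"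
    then obtain x where "x \<in> X" "q = skip_col2 x" "q = (n, 2) \<or> q = (n + 1, 1)" by blast
    then show False using that by (cases x) auto
  qed
  have "fst ` (leaves S - {(n, 1)}) \<subseteq> {..n}" using bounds unfolding leaves_def by force
  moreover have "fst ` (antidiagonal n - {(n, 1)}) \<subseteq> {..n}" unfolding antidiagonal_def by force
  ultimately have disj: "skip_col2 ` (leaves S - {(n, 1)}) \<inter> {(n, 2), (n + 1, 1)} = {}"
      "skip_col2 ` (antidiagonal n - {(n, 1)}) \<inter> {(n, 2), (n + 1, 1)} = {}"
    using disjoint by blast+
  have cancel: "A \<union> N = B \<union> N \<longleftrightarrow> A = B" if "A \<inter> N = {}" "B \<inter> N = {}" for A B N :: "'a set"
    using that by blast
  have "skip_col2 ` (leaves S - {(n, 1)}) \<union> {(n, 2), (n + 1, 1)}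
        = skip_col2 ` (antidiagonal n - {(n, 1)}) \<union> {(n, 2), (n + 1, 1)}
      \<longleftrightarrow> skip_col2 ` (leaves S - {(n, 1)}) = skip_col2 ` (antidiagonal n - {(n, 1)})"
    by (rule cancel[OF disj])
  also have "\<dots> \<longleftrightarrow> leaves S - {(n, 1)} = antidiagonal n - {(n, 1)}"
    by (rule inj_image_eq_iff[OF inj_skip_col2])
  also have "\<dots> \<longleftrightarrow> leaves S = antidiagonal n"
    using leaf corner_mem_antidiagonal by blast
  finally show ?thesis
    unfolding leaves_split_corner[OF ep] antidiagonal_Suc[OF n_pos] .
qed

lemma upper_diagonal_cnm_split_corner_iff:
  "upper_diagonal_cnm (n + 1) (split_corner n S) \<longleftrightarrow> upper_diagonal_cnm n S"
proof -
  have "children S (n, 1) = {} \<and> leaves (split_corner n S) = antidiagonal (n + 1)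
      \<longleftrightarrow> leaves S = antidiagonal n" if "is_cnm n S"
  proof -
    have ep: "exclusive_parent S" using that unfolding is_cnm_iff by simp
    have "children S (n, 1) = {} \<longleftrightarrow> (n, 1) \<in> leaves S"
      using corner unfolding leaves_def by simp
    then show ?thesis
      using leaves_split_corner_eq_antidiagonal_iff[OF ep] corner_mem_antidiagonal by blast
  qed
  then show ?thesis
    unfolding upper_diagonal_cnm_iff is_cnm_split_corner_iff by blast
qed

lemma avoids_antidiagonal_split_corner_iff:
  "(\<forall>i\<in>{1..n - 1}. (i, n + 1 - i) \<notin> split_corner n S) \<longleftrightarrow> (\<forall>i\<in>{1..n - 2}. (i, n - i) \<notin> S)"
proof -
  have shifted: "(i, n + 1 - i) \<in> split_corner n S \<longleftrightarrow> (i, n - i) \<in> S" if "i \<in> {1..n - 2}" for i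
  proof -
    have "(i, n + 1 - i) = skip_col2 (i, n - i)" using that by (auto simp: skip2_def)
    moreover have "i \<le> n" using that by auto
    ultimately show ?thesis using skip_col2_mem_split_corner_iff[of "(i, n - i)" n S] by simp
  qed
  have "n + 1 - (n - 1) = 2" using n_pos by simp
  then have new_col: "(n - 1, n + 1 - (n - 1)) \<notin> split_corner n S"
    using col2_mem_iff[of "n - 1"] n_pos by simp
  show ?thesis
  proof (intro iffI ballI)
    fix i assume avoid: "\<forall>i\<in>{1..n - 1}. (i, n + 1 - i) \<notin> split_corner n S"
      and i: "i \<in> {1..n - 2}"
    then have "i \<in> {1..n - 1}" by auto
    then show "(i, n - i) \<notin> S" using avoid shifted[OF i] by blast
  next
    fix i assume avoid: "\<forall>i\<in>{1..n - 2}. (i, n - i) \<notin> S" and i: "i \<in> {1..n - 1}"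
    show "(i, n + 1 - i) \<notin> split_corner n S"
    proof (cases "i = n - 1")
      case True
      then show ?thesis using new_col by simp
    next
      case False
      then have "i \<in> {1..n - 2}" using i by auto
      then show ?thesis using avoid shifted by auto
    qed
  qed
qed

end

lemma last_row_corner_if_upper_diagonal_cnm:
  assumes U: "upper_diagonal_cnm n S" and "n \<ge> 1"
  shows "last_row_corner n S"
proof
  show "S \<subseteq> {1..n} \<times> {1..n}" using U unfolding upper_diagonal_cnm_def is_cnm_def by blast
  show "(n, 1) \<in> S" by (rule upper_diagonal_cnm_last_row(1)[OF assms])
  show "\<And>j. (n, j) \<in> S \<Longrightarrow> j = 1" by (rule upper_diagonal_cnm_last_row(2)[OF assms])
qed

text \<open>A vertex \<open>(a,2)\<close> with \<open>a < n\<close> would give the leaf \<open>(n,2)\<close> a possible parent both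
  above it and to its left, namely \<open>(n,1)\<close>.\<close>

lemma upper_diagonal_cnm_column_2:
  assumes U: "upper_diagonal_cnm (n + 1) T" and corner: "(n, 1) \<in> T" and "n \<ge> 1"
    and a: "(a, 2) \<in> T" "a \<le> n"
  shows "a = n"
proof (rule ccontr)
  assume "a \<noteq> n"
  have ep: "exclusive_parent T" using U unfolding upper_diagonal_cnm_iff is_cnm_iff by simp
  have "(n, 2) \<in> T"
    using U \<open>n \<ge> 1\<close> unfolding upper_diagonal_cnm_iff leaves_def antidiagonal_def by force
  moreover have "\<exists>i'<n. (i', 2) \<in> T" using a \<open>a \<noteq> n\<close> by (intro exI[of _ a]) auto
  moreover have "\<exists>j'<2. (n, j') \<in> T" using corner by (intro exI[of _ 1]) simp
  ultimately show False using exclusive_parentD[OF ep] by fastforce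
qed

lemma upper_diagonal_cnm_eq_split_corner:
  assumes U: "upper_diagonal_cnm (n + 1) T" and corner: "(n, 1) \<in> T" and "n \<ge> 1"
  obtains S where "last_row_corner n S" "T = split_corner n S"
proof -
  have cnm: "is_cnm (n + 1) T" and lv: "leaves T = antidiagonal (n + 1)"
    using U unfolding upper_diagonal_cnm_iff by simp_all
  have grid: "T \<subseteq> {1..n + 1} \<times> {1..n + 1}"
    using cnm unfolding is_cnm_iff by simp
  have sum_le: "a + b \<le> n + 2" if "(a, b) \<in> T" for a b
    using upper_diagonal_cnm_coordinate_sum_le[OF U that] by simp
  have new_leaves: "(n, 2) \<in> T" "(n + 1, 1) \<in> T"
    using lv \<open>n \<ge> 1\<close> unfolding leaves_def antidiagonal_def by force+
  define S where "S = {p. skip_col2 p \<in> T \<and> fst p \<le> n}"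
  have "last_row_corner n S"
  proof
    show "S \<subseteq> {1..n} \<times> {1..n}"
      using grid unfolding S_def by (force simp: skip2_def split: if_splits)
    show "(n, 1) \<in> S" using corner unfolding S_def by simp
    show "j = 1" if "(n, j) \<in> S" for j
      using that sum_le[of n "skip2 j"] grid unfolding S_def by (auto simp: skip2_def split: if_splits)
  qed
  moreover have "T = split_corner n S"
  proof (intro equalityI subsetI)
    fix q assume q: "q \<in> T"
    obtain a b where ab: "q = (a, b)" by (cases q)
    consider "a = n + 1" | "a \<le> n" "b = 2" | "a \<le> n" "b \<noteq> 2"
      using grid q ab by force
    then show "q \<in> split_corner n S"
    proof cases
      case 1
      then have "b = 1" using sum_le q ab grid by fastforce
      then show ?thesis using 1 ab unfolding split_corner_def by simp
    next
      case 2
      then show ?thesis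
        using upper_diagonal_cnm_column_2[OF U corner \<open>n \<ge> 1\<close>] q ab unfolding split_corner_def by simp
    next
      case 3
      define b' where "b' = (if b = 1 then 1 else b - 1)"
      have "skip2 b' = b" using 3 grid q ab unfolding b'_def by (auto simp: skip2_def)
      then have "(a, b') \<in> S" "q = skip_col2 (a, b')" using q ab 3 unfolding S_def by auto
      then show ?thesis unfolding split_corner_def by blast
    qed
  qed (use new_leaves in \<open>auto simp: split_corner_def S_def\<close>)
  ultimately show ?thesis using that by blast
qed

lemma bij_betw_split_corner:
  assumes "n \<ge> 1"
  shows "bij_betw (split_corner n) {S. upper_diagonal_cnm n S}
    {T. upper_diagonal_cnm (n + 1) T \<and> (n, 1) \<in> T}"
proof (rule bij_betw_imageI)
  show "inj_on (split_corner n) {S. upper_diagonal_cnm n S}"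
  proof (rule inj_onI, rule set_eqI)
    fix S1 S2 p
    assume "S1 \<in> {S. upper_diagonal_cnm n S}" "S2 \<in> {S. upper_diagonal_cnm n S}"
      and eq: "split_corner n S1 = split_corner n S2"
    then interpret S1: last_row_corner n S1 + S2: last_row_corner n S2
      using last_row_corner_if_upper_diagonal_cnm assms by simp_all
    show "p \<in> S1 \<longleftrightarrow> p \<in> S2"
    proof (cases "fst p \<le> n")
      case True
      then show ?thesis using skip_col2_mem_split_corner_iff[OF True] eq by metis
    next
      case False
      then show ?thesis using S1.grid S2.grid by auto
    qed
  qed
  show "split_corner n ` {S. upper_diagonal_cnm n S} =
      {T. upper_diagonal_cnm (n + 1) T \<and> (n, 1) \<in> T}"
  proof (intro equalityI subsetI)
    fix T assume "T \<in> split_corner n ` {S. upper_diagonal_cnm n S}"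
    then obtain S where S: "upper_diagonal_cnm n S" "T = split_corner n S" by auto
    then interpret last_row_corner n S using last_row_corner_if_upper_diagonal_cnm assms by simp
    show "T \<in> {T. upper_diagonal_cnm (n + 1) T \<and> (n, 1) \<in> T}"
      using S upper_diagonal_cnm_split_corner_iff corner_mem by simp
  next
    fix T assume "T \<in> {T. upper_diagonal_cnm (n + 1) T \<and> (n, 1) \<in> T}"
    then obtain S where S: "last_row_corner n S" "T = split_corner n S" "upper_diagonal_cnm (n + 1) T"
      using upper_diagonal_cnm_eq_split_corner assms by blast
    then show "T \<in> split_corner n ` {S. upper_diagonal_cnm n S}"
      using last_row_corner.upper_diagonal_cnm_split_corner_iff by blast
  qed
qed

lemma bij_betw_Collect_conj:
  assumes "bij_betw h {x. P x} {y. Q y}" and "\<And>x. P x \<Longrightarrow> R' (h x) \<longleftrightarrow> R x"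
  shows "bij_betw h {x. P x \<and> R x} {y. Q y \<and> R' y}"
proof (rule bij_betw_subset[OF assms(1)])
  have image: "h ` {x. P x} = {y. Q y}" using assms(1) unfolding bij_betw_def by simp
  show "h ` {x. P x \<and> R x} = {y. Q y \<and> R' y}"
  proof (intro equalityI subsetI)
    fix y assume "y \<in> {y. Q y \<and> R' y}"
    moreover from this obtain x where "P x" "y = h x" using image by blast
    ultimately show "y \<in> h ` {x. P x \<and> R x}" using assms(2) by blast
  qed (use image assms(2) in auto)
qed auto

lemma f_eq_card:
  "k + 2 \<le> n \<Longrightarrow> f n k =
     card {T. upper_diagonal_cnm n T \<and> (\<forall>i\<in>{1..k}. (i, n - i) \<notin> T) \<and> (k + 1, n - k - 1) \<in> T}"
  by (simp add: f_def)

lemma f_last_eq_card: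
  "n \<ge> 1 \<Longrightarrow> f n (n - 1) = card {T. upper_diagonal_cnm n T \<and> (\<forall>i\<in>{1..n - 1}. (i, n - i) \<notin> T)}"
  by (simp add: f_def)

lemma finite_upper_diagonal_cnms: "finite {T. upper_diagonal_cnm n T \<and> P T}"
proof (rule finite_subset)
  show "{T. upper_diagonal_cnm n T \<and> P T} \<subseteq> Pow ({1..n} \<times> {1..n})"
    unfolding upper_diagonal_cnm_def is_cnm_def by blast
qed simp

lemma f_last_add_f_penultimate:
  assumes "n \<ge> 2"
  shows "f n (n - 1) + f n (n - 2) =
    card {T. upper_diagonal_cnm n T \<and> (\<forall>i\<in>{1..n - 2}. (i, n - i) \<notin> T)}"
proof -
  let ?avoid = "\<lambda>T. upper_diagonal_cnm n T \<and> (\<forall>i\<in>{1..n - 2}. (i, n - i) \<notin> T)"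
  have penultimate: "n - 2 + 1 = n - 1" "n - (n - 2) - 1 = 1" using assms by auto
  have "{1..n - 1} = insert (n - 1) {1..n - 2}" "n - (n - 1) = 1" using assms by auto
  then have "f n (n - 1) = card {T. ?avoid T \<and> (n - 1, 1) \<notin> T}"
    using f_last_eq_card[of n] assms by (simp add: conj_ac)
  moreover have "f n (n - 2) = card {T. ?avoid T \<and> (n - 1, 1) \<in> T}"
    using f_eq_card[of "n - 2" n, unfolded penultimate] assms by simp
  moreover have "{T. ?avoid T} = {T. ?avoid T \<and> (n - 1, 1) \<notin> T} \<union> {T. ?avoid T \<and> (n - 1, 1) \<in> T}"
    by auto
  ultimately show ?thesis
    using finite_upper_diagonal_cnms by (simp add: card_Un_disjoint disjoint_iff)
qed

lemma bij_betw_split_corner_avoiding: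
  assumes "n \<ge> 2"
  shows "bij_betw (split_corner n)
    {S. upper_diagonal_cnm n S \<and> (\<forall>i\<in>{1..n - 2}. (i, n - i) \<notin> S)}
    {T. (upper_diagonal_cnm (n + 1) T \<and> (n, 1) \<in> T) \<and> (\<forall>i\<in>{1..n - 1}. (i, n + 1 - i) \<notin> T)}"
proof (rule bij_betw_Collect_conj)
  show "bij_betw (split_corner n) {S. upper_diagonal_cnm n S}
      {T. upper_diagonal_cnm (n + 1) T \<and> (n, 1) \<in> T}"
    using bij_betw_split_corner assms by simp
qed (use last_row_corner.avoids_antidiagonal_split_corner_iff last_row_corner_if_upper_diagonal_cnm assms
     in auto)

theorem lemma4p9:
  fixes n :: nat
  assumes "n \<ge> 2"
  shows "int (f n (n - 1)) = int (f (n + 1) (n - 1)) - int (f n (n - 2))"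
proof -
  have "f (n + 1) (n - 1) = card {T. (upper_diagonal_cnm (n + 1) T \<and> (n, 1) \<in> T)
      \<and> (\<forall>i\<in>{1..n - 1}. (i, n + 1 - i) \<notin> T)}"
    using f_eq_card[of "n - 1" "n + 1"] assms by (simp add: conj_ac)
  also have "\<dots> = card {S. upper_diagonal_cnm n S \<and> (\<forall>i\<in>{1..n - 2}. (i, n - i) \<notin> S)}"
    using bij_betw_same_card[OF bij_betw_split_corner_avoiding[OF assms]] by simp
  also have "\<dots> = f n (n - 1) + f n (n - 2)"
    using f_last_add_f_penultimate[OF assms] by simp
  finally show ?thesis by simp
qed

end
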